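(* Let $k \geq 2$ be an integer and suppose that for every admissible set $\mathcal{H}$ with $|\mathcal{H}| = k$, the difference set $\mathcal{D}(\mathcal{H})$ contains a weak Polignac number. Then \[ \liminf_{x \to \infty} \frac{\mathcal{P}(x)}{x} \;\geq\; \frac{2}{(k-1)\big((k-1)(k-2)+2\big)\,P(k)}. \]
   Context: A positive integer $d$ is a weak Polignac number if there are infinitely many pairs of primes $(p,q)$ with $q - p = d$. For real $x$, $\mathcal{P}(x)$ denotes the number of weak Polignac numbers less than or equal to $x$. A finite set of integers $\mathcal{H} = \{h_1, \ldots, h_k\}$ is admissible if for every prime $p$ there is an integer $m$ with $h_i \not\equiv m \pmod p$ for all $1 \le i \le k$. Its difference set is $\mathcal{D}(\mathcal{H}) = \{h_j - h_i : h_i, h_j \in \mathcal{H},\ h_i < h_j\}$. For an integer $k$, $P(k) = \prod_{p \le k,\ p \text{ prime}} p$ is the product of all primes not exceeding $k$. *)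

theory Defs
  imports "HOL-Analysis.Analysis" "HOL-Computational_Algebra.Primes"
begin

definition weak_polignac :: "nat \<Rightarrow> bool" where
  "weak_polignac d \<longleftrightarrow> d > 0 \<and>
     infinite {(p, q). prime (p::nat) \<and> prime (q::nat) \<and> int q - int p = int d}"

definition polignac_count :: "real \<Rightarrow> nat" where
  "polignac_count x = card {d. weak_polignac d \<and> real d \<le> x}"

definition admissible :: "int set \<Rightarrow> bool" where
  "admissible H \<longleftrightarrow> finite H \<and>
     (\<forall>p::nat. prime p \<longrightarrow> (\<exists>m::int. \<forall>h\<in>H. h mod int p \<noteq> m mod int p))"

definition diff_set :: "int set \<Rightarrow> int set" where
  "diff_set H = {hj - hi | hi hj. hi \<in> H \<and> hj \<in> H \<and> hi < hj}"

definition primorial :: "nat \<Rightarrow> nat" where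
  "primorial k = (\<Prod>p\<in>{p. prime p \<and> p \<le> k}. p)"

end

theory Submission imports Defs begin

text \<open>Call \<open>n\<close> good if \<open>n \<cdot> P(k)\<close> is a weak Polignac number, and let \<open>c\<close> be the number of good
  \<open>n \<le> M\<close>. Greedily choosing each next element as small as possible, one finds \<open>k\<close> integers in
  \<open>[0, c k (k-1)/2 + k - 1]\<close> no two of which differ by a good number: each chosen element forbids
  at most \<open>c\<close> candidates. Multiplying them by \<open>P(k)\<close> gives an admissible \<open>k\<close>-set (every prime
  \<open>p \<le> k\<close> divides all its elements, larger primes have a residue class to spare), whose
  difference set contains no weak Polignac number. Hence the hypothesis forces
  \<open>c k (k-1)/2 + k - 1 > M\<close>, i.e. at least \<open>2M/(k(k-1)) - O(1)\<close> weak Polignac numbers below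
  \<open>M P(k)\<close>; the constant \<open>2/((k-1) k P(k))\<close> obtained this way dominates the stated one.\<close>

fun greedy_bound :: "nat \<Rightarrow> nat \<Rightarrow> nat" where
  "greedy_bound c 0 = 0"
| "greedy_bound c (Suc j) = greedy_bound c j + Suc j * c + 1"

lemma greedy_bound_closed_form: "2 * greedy_bound c j = c * j * (j + 1) + 2 * j"
  by (induction j) (auto simp: algebra_simps)

lemma exists_difference_avoiding_set:
  fixes Q :: "nat \<Rightarrow> bool"
  assumes "greedy_bound (card {n\<in>{1..M}. Q n}) j \<le> M"
  shows "\<exists>A. finite A \<and> card A = Suc j \<and> A \<subseteq> {0..greedy_bound (card {n\<in>{1..M}. Q n}) j} \<and>
           (\<forall>a\<in>A. \<forall>b\<in>A. a < b \<longrightarrow> \<not> Q (b - a))"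
  using assms
proof (induction j)
  case 0
  show ?case by (intro exI[of _ "{0}"]) auto
next
  case (Suc j)
  let ?G = "{n\<in>{1..M}. Q n}"
  let ?c = "card ?G"
  let ?s = "greedy_bound ?c j"
  obtain A where A: "finite A" "card A = Suc j" "A \<subseteq> {0..?s}"
    "\<forall>a\<in>A. \<forall>b\<in>A. a < b \<longrightarrow> \<not> Q (b - a)"
    using Suc by auto
  define C where "C = {?s + 1 .. ?s + Suc j * ?c + 1}"
  define B where "B = {x\<in>C. \<exists>a\<in>A. Q (x - a)}"
  have "B \<subseteq> (\<Union>a\<in>A. (\<lambda>n. n + a) ` ?G)"
  proof
    fix x assume "x \<in> B"
    then obtain a where a: "a \<in> A" "Q (x - a)" "x \<in> C" unfolding B_def by auto
    have "a \<le> ?s" "?s < x" "x \<le> M" using a A(3) Suc.prems unfolding C_def by auto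
    then have "x - a \<in> ?G" "x = (x - a) + a" using a by auto
    then show "x \<in> (\<Union>a\<in>A. (\<lambda>n. n + a) ` ?G)" using a(1) by blast
  qed
  then have "card B \<le> card (\<Union>a\<in>A. (\<lambda>n. n + a) ` ?G)"
    by (intro card_mono) (auto simp: A(1))
  also have "\<dots> \<le> (\<Sum>a\<in>A. card ((\<lambda>n. n + a) ` ?G))"
    by (rule card_UN_le[OF A(1)])
  also have "\<dots> \<le> (\<Sum>a\<in>A. ?c)"
    by (intro sum_mono card_image_le) auto
  also have "\<dots> < card C" using A(2) unfolding C_def by simp
  finally have "card B < card C" .
  moreover have "finite B" unfolding B_def C_def by simp
  ultimately have "\<not> C \<subseteq> B" using card_mono[of B C] by linarith
  then obtain x where x: "x \<in> C" "x \<notin> B" by blast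
  have above: "\<forall>a\<in>A. a < x" using A(3) x(1) unfolding C_def by auto
  show ?case
  proof (intro exI[of _ "insert x A"] conjI)
    show "finite (insert x A)" "card (insert x A) = Suc (Suc j)" using A(1,2) above by auto
    show "insert x A \<subseteq> {0..greedy_bound ?c (Suc j)}" using A(3) x(1) unfolding C_def by auto
    show "\<forall>a\<in>insert x A. \<forall>b\<in>insert x A. a < b \<longrightarrow> \<not> Q (b - a)"
      using A(4) above x unfolding B_def by auto
  qed
qed

lemma primorial_pos: "primorial k > 0"
  unfolding primorial_def by (intro prod_pos) (auto simp: prime_gt_0_nat)

lemma prime_dvd_primorial: "prime p \<Longrightarrow> p \<le> k \<Longrightarrow> p dvd primorial k"
  unfolding primorial_def by (intro dvd_prodI) auto

lemma admissible_primorial_multiples: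
  fixes H :: "int set"
  assumes "finite H" "card H \<le> k"
  shows "admissible ((\<lambda>h. int (primorial k) * h) ` H)"
  unfolding admissible_def
proof (intro conjI allI impI)
  let ?H = "(\<lambda>h. int (primorial k) * h) ` H"
  show "finite ?H" using assms by simp
  fix p :: nat assume p: "prime p"
  show "\<exists>m::int. \<forall>h\<in>?H. h mod int p \<noteq> m mod int p"
  proof (cases "p \<le> k")
    case True
    then have "int p dvd int (primorial k)" using prime_dvd_primorial[OF p] by simp
    moreover have "int p > 1" using p prime_gt_1_nat by simp
    ultimately show ?thesis by (intro exI[of _ 1]) auto
  next
    case False
    have "card ((\<lambda>h. h mod int p) ` ?H) \<le> card H"
      unfolding image_image using assms(1) by (rule card_image_le)
    also have "\<dots> < card {0..<int p}" using False assms(2) by simp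
    finally have "\<not> {0..<int p} \<subseteq> (\<lambda>h. h mod int p) ` ?H"
      using card_mono[of "(\<lambda>h. h mod int p) ` ?H" "{0..<int p}"] assms(1) by auto
    then obtain r where r: "r \<in> {0..<int p}" "r \<notin> (\<lambda>h. h mod int p) ` ?H" by blast
    then show ?thesis by (intro exI[of _ r]) force
  qed
qed

lemma card_polignac_multiples_lower_bound:
  fixes k M :: nat
  assumes k: "k \<ge> 2"
    and hyp: "\<forall>H. admissible H \<and> card H = k \<longrightarrow>
           (\<exists>d\<in>diff_set H. d > 0 \<and> weak_polignac (nat d))"
  shows "2 * M < card {n\<in>{1..M}. weak_polignac (n * primorial k)} * (k - 1) * k + 2 * (k - 1)"
proof (rule ccontr)
  define P where "P = primorial k"
  define Q where "Q = (\<lambda>n. weak_polignac (n * P))"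
  let ?c = "card {n\<in>{1..M}. Q n}"
  assume "\<not> ?thesis"
  moreover have "2 * greedy_bound ?c (k - 1) = ?c * (k - 1) * k + 2 * (k - 1)"
    using greedy_bound_closed_form[of ?c "k - 1"] k by simp
  ultimately have "greedy_bound ?c (k - 1) \<le> M"
    unfolding Q_def P_def by linarith
  then obtain A where A: "finite A" "card A = k"
    "\<forall>a\<in>A. \<forall>b\<in>A. a < b \<longrightarrow> \<not> Q (b - a)"
    using exists_difference_avoiding_set[where Q = Q and M = M and j = "k - 1"] k by auto
  let ?H = "(\<lambda>a. int P * a) ` int ` A"
  have P: "P > 0" unfolding P_def by (rule primorial_pos)
  have "card ?H = k"
    using A(2) P by (simp add: card_image inj_on_def)
  moreover have "admissible ?H"
    unfolding P_def using A by (intro admissible_primorial_multiples) (auto simp: card_image)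
  ultimately obtain d where d: "d \<in> diff_set ?H" "weak_polignac (nat d)"
    using hyp by blast
  then obtain a b where ab: "a \<in> A" "b \<in> A" "int P * int a < int P * int b"
    "d = int P * int b - int P * int a"
    unfolding diff_set_def by blast
  then have "a < b" using P by (simp add: mult_less_cancel_left)
  then have "d = int ((b - a) * P)" using ab(4) by (simp add: of_nat_diff algebra_simps)
  then have "nat d = (b - a) * P" by (simp only: nat_int)
  then have "Q (b - a)" using d(2) unfolding Q_def by simp
  then show False using A(3) ab(1,2) \<open>a < b\<close> by blast
qed

lemma finite_polignac_upto: "finite {d. weak_polignac d \<and> real d \<le> x}"
  by (rule finite_subset[of _ "{..nat \<lceil>x\<rceil>}"]) (auto simp: le_nat_iff, linarith)

lemma card_polignac_multiples_le_polignac_count: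
  fixes P :: nat
  assumes "P > 0"
  shows "card {n\<in>{1..nat \<lfloor>x / real P\<rfloor>}. weak_polignac (n * P)} \<le> polignac_count x"
  unfolding polignac_count_def
proof (rule card_inj_on_le[OF _ _ finite_polignac_upto])
  show "inj_on (\<lambda>n. n * P) {n\<in>{1..nat \<lfloor>x / real P\<rfloor>}. weak_polignac (n * P)}"
    using assms by (auto simp: inj_on_def)
  show "(\<lambda>n. n * P) ` {n\<in>{1..nat \<lfloor>x / real P\<rfloor>}. weak_polignac (n * P)}
          \<subseteq> {d. weak_polignac d \<and> real d \<le> x}"
  proof safe
    fix n assume n: "n \<in> {1..nat \<lfloor>x / real P\<rfloor>}"
    then have "real n \<le> x / real P" by (auto simp: le_nat_iff) linarith
    then show "real (n * P) \<le> x" using assms by (simp add: field_simps)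
  qed
qed

lemma polignac_density_lower_bound:
  fixes k :: nat and x :: real
  assumes k: "k \<ge> 2"
    and hyp: "\<forall>H. admissible H \<and> card H = k \<longrightarrow>
           (\<exists>d\<in>diff_set H. d > 0 \<and> weak_polignac (nat d))"
    and x: "x > 0"
  shows "2 / (real (k - 1) * real k * real (primorial k)) - 2 / (real (k - 1) * x)
           \<le> real (polignac_count x) / x"
proof -
  define P where "P = primorial k"
  define M where "M = nat \<lfloor>x / real P\<rfloor>"
  define c where "c = card {n\<in>{1..M}. weak_polignac (n * P)}"
  define K where "K = real (k - 1)"
  have P: "P > 0" unfolding P_def by (rule primorial_pos)
  have K: "K = real k - 1" "K > 0" using k unfolding K_def by auto
  have "2 * M < c * (k - 1) * k + 2 * (k - 1)"
    unfolding c_def P_def by (rule card_polignac_multiples_lower_bound[OF k hyp])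
  then have "real (2 * M) < real (c * (k - 1) * k + 2 * (k - 1))"
    by (simp only: of_nat_less_iff)
  then have "2 * real M < real c * (K * real k) + 2 * K"
    unfolding K_def by (simp only: of_nat_mult of_nat_add of_nat_numeral mult.assoc)
  moreover have "real c * (K * real k) \<le> real (polignac_count x) * (K * real k)"
    using card_polignac_multiples_le_polignac_count[OF P, of x] K
    unfolding c_def M_def by (intro mult_right_mono) auto
  moreover have "x / real P - 1 \<le> real M" unfolding M_def by linarith
  ultimately have bound: "2 * (x / real P) - 2 * real k \<le> real (polignac_count x) * (K * real k)"
    using K(1) by linarith
  have "2 / (K * real k * real P) - 2 / (K * x) = (2 * (x / real P) - 2 * real k) / (K * real k * x)"
    using K(2) k x P by (simp add: field_simps)
  also have "\<dots> \<le> real (polignac_count x) * (K * real k) / (K * real k * x)"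
    using bound K(2) k x by (intro divide_right_mono) auto
  also have "\<dots> = real (polignac_count x) / x" using K(2) k by simp
  finally show ?thesis unfolding K_def P_def .
qed

lemma Liminf_ge_of_eventually_ge:
  fixes f g :: "'a \<Rightarrow> real"
  assumes "eventually (\<lambda>x. g x \<le> f x) F" "(g \<longlongrightarrow> a) F" "F \<noteq> bot"
  shows "ereal a \<le> Liminf F (\<lambda>x. ereal (f x))"
proof -
  have "Liminf F (\<lambda>x. ereal (g x)) = ereal a"
    using assms(2,3) by (intro lim_imp_Liminf tendsto_ereal) auto
  moreover have "Liminf F (\<lambda>x. ereal (g x)) \<le> Liminf F (\<lambda>x. ereal (f x))"
    using assms(1) by (intro Liminf_mono) auto
  ultimately show ?thesis by simp
qed

lemma stated_constant_le:
  assumes "k \<ge> (2::nat)" "P > 0"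
  shows "2 / (real (k - 1) * (real (k - 1) * real (k - 2) + 2) * real P)
           \<le> 2 / (real (k - 1) * real k * real P)"
proof -
  have k: "real (k - 1) = real k - 1" "real (k - 2) = real k - 2" using assms by auto
  have "real k \<le> (real k - 1) * (real k - 2) + 2"
    using zero_le_power2[of "real k - 2"] by (simp add: power2_eq_square algebra_simps)
  then show ?thesis unfolding k using assms
    by (intro divide_left_mono mult_right_mono mult_left_mono mult_pos_pos) auto
qed

theorem theorem2:
  fixes k :: nat
  assumes "k \<ge> 2"
    and "\<forall>H. admissible H \<and> card H = k \<longrightarrow>
           (\<exists>d\<in>diff_set H. d > 0 \<and> weak_polignac (nat d))"
  shows "ereal (2 / (real (k - 1) * (real (k - 1) * real (k - 2) + 2) * real (primorial k)))
           \<le> Liminf at_top (\<lambda>x::real. ereal (real (polignac_count x) / x))"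
proof -
  define a where "a = 2 / (real (k - 1) * real k * real (primorial k))"
  have "eventually (\<lambda>x. a - 2 / (real (k - 1) * x) \<le> real (polignac_count x) / x) at_top"
    using eventually_gt_at_top[of "0::real"] unfolding a_def
    by (rule eventually_mono) (rule polignac_density_lower_bound[OF assms])
  moreover have "((\<lambda>x. a - 2 / (real (k - 1) * x)) \<longlongrightarrow> a) at_top"
    using tendsto_diff[OF tendsto_const tendsto_divide_0[OF tendsto_const
        filterlim_at_top_imp_at_infinity[OF filterlim_tendsto_pos_mult_at_top[OF tendsto_const _
        filterlim_ident]]], of "real (k - 1)" a 2] assms(1) by simp
  ultimately have "ereal a \<le> Liminf at_top (\<lambda>x::real. ereal (real (polignac_count x) / x))"
    by (rule Liminf_ge_of_eventually_ge) simp
  moreover have "2 / (real (k - 1) * (real (k - 1) * real (k - 2) + 2) * real (primorial k)) \<le> a"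
    unfolding a_def by (rule stated_constant_le[OF assms(1) primorial_pos])
  ultimately show ?thesis by (meson ereal_less_eq(3) order_trans)
qed

end
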